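(* Let $(\Omega,\mathcal{F},\mathbb{P})$ be a nonatomic probability space, let $u:\mathbb{R}\to\mathbb{R}\cup\{-\infty\}$ be a utility function bounded from above, let $\alpha\in\mathbb{R}$ be such that $u(x)\ge\alpha$ for some $x\in\mathbb{R}$, and let $\mathcal{A}_u^\infty=\{X\in L^\infty:\mathbb{E}[u(X)]\ge\alpha\}$. Assume that either $u(x)\le\alpha$ for all $x\in\mathbb{R}$ or that $u$ attains the value $-\infty$. Then, for any traded asset $S=(S_0,S_T)$ with $S_T\in L^\infty$ such that $\rho_{\mathcal{A}_u^\infty,S}$ is finite-valued on $L^\infty$, we have $\mathrm{Index}_{\mathrm{fin}}(\rho_{\mathcal{A}_u^\infty,S})=\infty$.
   Context: A utility function is a nonconstant, increasing, concave function $u:\mathbb{R}\to\mathbb{R}\cup\{-\infty\}$. A traded asset is $S=(S_0,S_T)$ with $S_0>0$, $S_T\ge0$ a.s., $S_T\ne0$. For $\mathcal{B}\subset L^\infty$, $\rho_{\mathcal{B},S}(X)=\inf\{m\in\mathbb{R}:X+\frac{m}{S_0}S_T\in\mathcal{B}\}$. For a convex, law-invariant acceptance set $\mathcal{A}\subset L^\infty$ (nonempty proper, $\mathcal{A}+L^\infty_+\subset\mathcal{A}$, closed under equality in law) with $\rho_{\mathcal{A},S}$ finite-valued on $L^\infty$, the index of finiteness is $\mathrm{Index}_{\mathrm{fin}}(\rho_{\mathcal{A},S})=\inf\{p\in[1,\infty):\mathrm{Cl}_p(\mathcal{A})\text{ has nonempty interior in }L^p\}$, where $\mathrm{Cl}_p(\mathcal{A})$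 is the closure of $\mathcal{A}$ in $L^p$ and $\inf\emptyset=\infty$. *)

theory Defs
  imports "HOL-Probability.Probability"
begin

definition nonatomic :: "'a measure \<Rightarrow> bool" where
  "nonatomic M \<longleftrightarrow> (\<forall>A\<in>sets M. measure M A > 0 \<longrightarrow>
     (\<exists>B\<in>sets M. B \<subseteq> A \<and> 0 < measure M B \<and> measure M B < measure M A))"

definition utility :: "(real \<Rightarrow> ereal) \<Rightarrow> bool" where
  "utility u \<longleftrightarrow> (\<forall>x. u x \<noteq> \<infinity>) \<and> (\<exists>x y. u x \<noteq> u y) \<and> mono u \<and>
     (\<forall>x y t. 0 < t \<and> t < 1 \<longrightarrow>
        ereal t * u x + ereal (1 - t) * u y \<le> u (t * x + (1 - t) * y))"

definition Linf :: "'a measure \<Rightarrow> ('a \<Rightarrow> real) set" where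
  "Linf M = {X. X \<in> borel_measurable M \<and> (\<exists>C. AE \<omega> in M. \<bar>X \<omega>\<bar> \<le> C)}"

definition Lp :: "'a measure \<Rightarrow> real \<Rightarrow> ('a \<Rightarrow> real) set" where
  "Lp M p = {X. X \<in> borel_measurable M \<and> integrable M (\<lambda>\<omega>. \<bar>X \<omega>\<bar> powr p)}"

definition Lp_norm :: "'a measure \<Rightarrow> real \<Rightarrow> ('a \<Rightarrow> real) \<Rightarrow> real" where
  "Lp_norm M p X = (\<integral>\<omega>. \<bar>X \<omega>\<bar> powr p \<partial>M) powr (1 / p)"

definition Lp_closure :: "'a measure \<Rightarrow> real \<Rightarrow> ('a \<Rightarrow> real) set \<Rightarrow> ('a \<Rightarrow> real) set" where
  "Lp_closure M p A = {X \<in> Lp M p. \<forall>\<epsilon>>0. \<exists>Y\<in>A. Lp_norm M p (\<lambda>\<omega>. X \<omega> - Y \<omega>) < \<epsilon>}"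

definition Lp_nonempty_interior :: "'a measure \<Rightarrow> real \<Rightarrow> ('a \<Rightarrow> real) set \<Rightarrow> bool" where
  "Lp_nonempty_interior M p C \<longleftrightarrow> (\<exists>X\<in>C. \<exists>r>0. \<forall>Y\<in>Lp M p.
      Lp_norm M p (\<lambda>\<omega>. Y \<omega> - X \<omega>) < r \<longrightarrow> Y \<in> C)"

text \<open>Index of finiteness (inf of the empty set is infinity).\<close>
definition index_fin :: "'a measure \<Rightarrow> ('a \<Rightarrow> real) set \<Rightarrow> ereal" where
  "index_fin M A = Inf (ereal ` {p. 1 \<le> p \<and> Lp_nonempty_interior M p (Lp_closure M p A)})"

definition expected_utility :: "'a measure \<Rightarrow> (real \<Rightarrow> ereal) \<Rightarrow> ('a \<Rightarrow> real) \<Rightarrow> ereal" where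
  "expected_utility M u X =
     enn2ereal (\<integral>\<^sup>+ \<omega>. e2ennreal (max 0 (u (X \<omega>))) \<partial>M)
   - enn2ereal (\<integral>\<^sup>+ \<omega>. e2ennreal (max 0 (- u (X \<omega>))) \<partial>M)"

definition utility_acceptance :: "'a measure \<Rightarrow> (real \<Rightarrow> ereal) \<Rightarrow> real \<Rightarrow> ('a \<Rightarrow> real) set" where
  "utility_acceptance M u \<alpha> = {X \<in> Linf M. expected_utility M u X \<ge> ereal \<alpha>}"

definition rho :: "('a \<Rightarrow> real) set \<Rightarrow> real \<Rightarrow> ('a \<Rightarrow> real) \<Rightarrow> ('a \<Rightarrow> real) \<Rightarrow> ereal" where
  "rho B S0 ST X = Inf (ereal ` {m. (\<lambda>\<omega>. X \<omega> + (m / S0) * ST \<omega>) \<in> B})"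

definition traded_asset :: "'a measure \<Rightarrow> real \<Rightarrow> ('a \<Rightarrow> real) \<Rightarrow> bool" where
  "traded_asset M S0 ST \<longleftrightarrow> S0 > 0 \<and> ST \<in> borel_measurable M \<and>
     (AE \<omega> in M. ST \<omega> \<ge> 0) \<and> \<not> (AE \<omega> in M. ST \<omega> = 0)"

end

theory Submission imports Defs begin

text \<open>Every acceptable position X satisfies X > t almost surely for one constant t: either
  u(t) = -\<infinity> and X \<le> t on a non-null set forces E[u(X)] = -\<infinity>, or u \<le> \<alpha> with u(t) < \<alpha>, and
  X \<le> t on a non-null set pushes E[u(X)] strictly below \<alpha>. A set of random variables bounded
  below in this way has L^p closure with empty interior for every p: around any X, lower it to
  t - 1 on a non-null set B on which X is bounded. Since the space is nonatomic, B can be chosen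
  so small that the change has L^p norm below any given radius, yet every acceptable Z stays at
  L^p distance at least measure(B)^(1/p) from the modified variable.\<close>

lemma nonatomic_subset_measure_le_divide_power:
  assumes "finite_measure M" "nonatomic M" "A \<in> sets M" "measure M A > 0"
  shows "\<exists>B\<in>sets M. B \<subseteq> A \<and> 0 < measure M B \<and> measure M B \<le> measure M A / 2 ^ n"
proof (induction n)
  case 0
  then show ?case using assms by auto
next
  case (Suc n)
  then obtain B where B: "B \<in> sets M" "B \<subseteq> A" "0 < measure M B" "measure M B \<le> measure M A / 2 ^ n"
    by blast
  then obtain C where C: "C \<in> sets M" "C \<subseteq> B" "0 < measure M C" "measure M C < measure M B"
    using assms(2) unfolding nonatomic_def by blast
  have diff: "measure M (B - C) = measure M B - measure M C"
    using finite_measure.finite_measure_Diff[OF assms(1) B(1) C(1) C(2)] .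
  have half: "measure M B / 2 \<le> measure M A / 2 ^ Suc n"
    using B(4) by (simp add: divide_right_mono)
  show ?case
  proof (cases "measure M C \<le> measure M B / 2")
    case True
    then show ?thesis using B C half by (intro bexI[of _ C]) auto
  next
    case False
    then show ?thesis using B C half diff by (intro bexI[of _ "B - C"]) auto
  qed
qed

lemma nonatomic_small_subset:
  assumes "finite_measure M" "nonatomic M" "A \<in> sets M" "measure M A > 0" "e > 0"
  shows "\<exists>B\<in>sets M. B \<subseteq> A \<and> 0 < measure M B \<and> measure M B < e"
proof -
  obtain n :: nat where "measure M A / e < 2 ^ n"
    using real_arch_pow[of 2 "measure M A / e"] by auto
  then have lt: "measure M A / 2 ^ n < e"
    using assms(5) by (simp add: divide_less_eq mult.commute)
  obtain B where "B \<in> sets M" "B \<subseteq> A" "0 < measure M B" "measure M B \<le> measure M A / 2 ^ n"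
    using nonatomic_subset_measure_le_divide_power[OF assms(1-4)] by blast
  then show ?thesis using lt by (intro bexI[of _ B]) auto
qed

lemma prob_space_bounded_level_set_pos:
  fixes X :: "'a \<Rightarrow> real"
  assumes "prob_space M" "X \<in> borel_measurable M"
  shows "\<exists>K\<ge>0. 0 < measure M {\<omega>\<in>space M. \<bar>X \<omega>\<bar> \<le> K}"
proof (rule ccontr)
  assume "\<not> ?thesis"
  then have "\<forall>n::nat. AE \<omega> in M. \<not> \<bar>X \<omega>\<bar> \<le> real n"
    using prob_space.prob_Collect_eq_0[OF assms(1)] assms(2) by (auto simp: zero_less_measure_iff)
  then have "AE \<omega> in M. \<forall>n::nat. \<not> \<bar>X \<omega>\<bar> \<le> real n"
    by (simp add: AE_all_countable)
  then have "AE \<omega> in M. False"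
    by eventually_elim (metis real_arch_simple not_less)
  then show False
    using AE_iff_measurable[of "space M" M "\<lambda>_. False"] prob_space.emeasure_space_1[OF assms(1)]
    by auto
qed

lemma powr_abs_diff_le:
  fixes y z C p :: real
  assumes "p > 0" "\<bar>z\<bar> \<le> C"
  shows "\<bar>y - z\<bar> powr p \<le> 2 powr p * (\<bar>y\<bar> powr p + \<bar>C\<bar> powr p)"
proof -
  let ?m = "max \<bar>y\<bar> \<bar>C\<bar>"
  have "\<bar>y - z\<bar> powr p \<le> (2 * ?m) powr p"
    using assms by (intro powr_mono2) auto
  also have "\<dots> = 2 powr p * ?m powr p"
    by (simp add: powr_mult)
  also have "\<dots> \<le> 2 powr p * (\<bar>y\<bar> powr p + \<bar>C\<bar> powr p)"
    by (intro mult_left_mono) (auto simp: max_def)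
  finally show ?thesis .
qed

lemma integrable_powr_abs_diff_bounded:
  assumes "finite_measure M" "p > 0" "Y \<in> Lp M p" "Z \<in> borel_measurable M"
    "AE \<omega> in M. \<bar>Z \<omega>\<bar> \<le> C"
  shows "integrable M (\<lambda>\<omega>. \<bar>Y \<omega> - Z \<omega>\<bar> powr p)"
proof (rule Bochner_Integration.integrable_bound)
  have Y: "Y \<in> borel_measurable M" "integrable M (\<lambda>\<omega>. \<bar>Y \<omega>\<bar> powr p)"
    using assms(3) unfolding Lp_def by auto
  show "integrable M (\<lambda>\<omega>. 2 powr p * (\<bar>Y \<omega>\<bar> powr p + \<bar>C\<bar> powr p))"
    using Y(2) finite_measure.integrable_const[OF assms(1)]
    by (intro integrable_mult_right Bochner_Integration.integrable_add) auto
  show "(\<lambda>\<omega>. \<bar>Y \<omega> - Z \<omega>\<bar> powr p) \<in> borel_measurable M"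
    using Y(1) assms(4) by measurable
  show "AE \<omega> in M. norm (\<bar>Y \<omega> - Z \<omega>\<bar> powr p) \<le> norm (2 powr p * (\<bar>Y \<omega>\<bar> powr p + \<bar>C\<bar> powr p))"
    using assms(5) by eventually_elim (use powr_abs_diff_le[OF assms(2)] in auto)
qed

lemma Lp_if_const:
  assumes "finite_measure M" "X \<in> Lp M p" "B \<in> sets M"
  shows "(\<lambda>\<omega>. if \<omega> \<in> B then c else X \<omega>) \<in> Lp M p"
proof -
  have X: "X \<in> borel_measurable M" "integrable M (\<lambda>\<omega>. \<bar>X \<omega>\<bar> powr p)"
    using assms(2) unfolding Lp_def by auto
  have meas: "(\<lambda>\<omega>. if \<omega> \<in> B then c else X \<omega>) \<in> borel_measurable M"
    using X(1) assms(3) by (intro measurable_If_set) auto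
  have "integrable M (\<lambda>\<omega>. \<bar>if \<omega> \<in> B then c else X \<omega>\<bar> powr p)"
  proof (rule Bochner_Integration.integrable_bound)
    show "integrable M (\<lambda>\<omega>. \<bar>X \<omega>\<bar> powr p + \<bar>c\<bar> powr p)"
      using X(2) finite_measure.integrable_const[OF assms(1)] by (intro Bochner_Integration.integrable_add) auto
    show "(\<lambda>\<omega>. \<bar>if \<omega> \<in> B then c else X \<omega>\<bar> powr p) \<in> borel_measurable M"
      using meas by measurable
  qed (intro AE_I2, auto)
  with meas show ?thesis unfolding Lp_def by blast
qed

lemma Lp_norm_le_of_supported:
  assumes "finite_measure M" "p > 0" "f \<in> borel_measurable M" "B \<in> sets M" "L \<ge> 0"
    and zero: "\<And>\<omega>. \<omega> \<in> space M \<Longrightarrow> \<omega> \<notin> B \<Longrightarrow> f \<omega> = 0"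
    and bound: "\<And>\<omega>. \<omega> \<in> B \<Longrightarrow> \<bar>f \<omega>\<bar> \<le> L"
  shows "Lp_norm M p f \<le> L * measure M B powr (1 / p)"
proof -
  let ?h = "\<lambda>\<omega>. \<bar>f \<omega>\<bar> powr p"
  have B: "B \<inter> space M = B" "emeasure M B < \<top>"
    using assms(4) sets.sets_into_space finite_measure.emeasure_finite[OF assms(1)]
    by (auto simp: less_top)
  have dom: "?h \<omega> \<le> L powr p * indicator B \<omega>" if "\<omega> \<in> space M" for \<omega>
    using that zero bound assms(2) by (cases "\<omega> \<in> B") (auto intro: powr_mono2)
  have "integral\<^sup>L M ?h \<le> integral\<^sup>L M (\<lambda>\<omega>. L powr p * indicator B \<omega>)"
  proof (rule integral_mono)
    show "integrable M (\<lambda>\<omega>. L powr p * indicator B \<omega>)"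
      using assms(4) B by (intro integrable_mult_right integrable_real_indicator) auto
    then show "integrable M ?h"
      by (rule Bochner_Integration.integrable_bound) (use assms(3) dom in \<open>auto intro!: AE_I2\<close>)
  qed (use dom in auto)
  also have "\<dots> = L powr p * measure M B"
    using B by simp
  finally have "Lp_norm M p f \<le> (L powr p * measure M B) powr (1 / p)"
    unfolding Lp_norm_def using assms(2) by (intro powr_mono2) auto
  also have "\<dots> = L * measure M B powr (1 / p)"
    using assms(2,5) by (simp add: powr_mult powr_powr)
  finally show ?thesis .
qed

lemma Lp_norm_ge_of_ge_one:
  assumes "finite_measure M" "p > 0" "B \<in> sets M"
    and "integrable M (\<lambda>\<omega>. \<bar>f \<omega>\<bar> powr p)"
    and "AE \<omega> in M. \<omega> \<in> B \<longrightarrow> 1 \<le> \<bar>f \<omega>\<bar>"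
  shows "measure M B powr (1 / p) \<le> Lp_norm M p f"
proof -
  have B: "B \<inter> space M = B" "emeasure M B < \<top>"
    using assms(3) sets.sets_into_space finite_measure.emeasure_finite[OF assms(1)]
    by (auto simp: less_top)
  have "AE \<omega> in M. indicator B \<omega> \<le> \<bar>f \<omega>\<bar> powr p"
    using assms(5) by eventually_elim (use assms(2) ge_one_powr_ge_zero in \<open>auto simp: indicator_def\<close>)
  then have "integral\<^sup>L M (indicator B) \<le> integral\<^sup>L M (\<lambda>\<omega>. \<bar>f \<omega>\<bar> powr p)"
    using assms(3,4) B by (intro integral_mono_AE integrable_real_indicator) auto
  then show ?thesis
    unfolding Lp_norm_def using B assms(2) by (intro powr_mono2) auto
qed

lemma not_Lp_nonempty_interior_closure_bounded_below:
  assumes "prob_space M" "nonatomic M" "p > 0"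
    and bounded_below: "\<And>Z. Z \<in> A \<Longrightarrow> Z \<in> Linf M \<and> (AE \<omega> in M. t < Z \<omega>)"
  shows "\<not> Lp_nonempty_interior M p (Lp_closure M p A)"
proof
  assume "Lp_nonempty_interior M p (Lp_closure M p A)"
  then obtain X r where X: "X \<in> Lp M p" and r: "r > 0"
    and ball: "\<And>Y. Y \<in> Lp M p \<Longrightarrow> Lp_norm M p (\<lambda>\<omega>. Y \<omega> - X \<omega>) < r \<Longrightarrow> Y \<in> Lp_closure M p A"
    unfolding Lp_nonempty_interior_def Lp_closure_def by blast
  have fm: "finite_measure M"
    using assms(1) by (simp add: prob_space_def)
  have Xm: "X \<in> borel_measurable M"
    using X unfolding Lp_def by auto
  obtain K where K: "K \<ge> 0" "0 < measure M {\<omega>\<in>space M. \<bar>X \<omega>\<bar> \<le> K}"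
    using prob_space_bounded_level_set_pos[OF assms(1) Xm] by blast
  define L where "L = K + \<bar>t\<bar> + 1"
  have L: "L > 0"
    unfolding L_def using K by simp
  obtain B where B: "B \<in> sets M" "B \<subseteq> {\<omega>\<in>space M. \<bar>X \<omega>\<bar> \<le> K}"
    and mB: "0 < measure M B" "measure M B < (r / L) powr p"
    using nonatomic_small_subset[OF fm assms(2) _ K(2), of "(r / L) powr p"] Xm r L by auto
  define Y where "Y \<omega> = (if \<omega> \<in> B then t - 1 else X \<omega>)" for \<omega>
  have Y: "Y \<in> Lp M p"
    unfolding Y_def using Lp_if_const[OF fm X B(1)] .
  then have Ym: "Y \<in> borel_measurable M"
    unfolding Lp_def by auto
  have "(\<lambda>\<omega>. Y \<omega> - X \<omega>) \<in> borel_measurable M"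
    using Ym Xm by measurable
  then have "Lp_norm M p (\<lambda>\<omega>. Y \<omega> - X \<omega>) \<le> L * measure M B powr (1 / p)"
    using B L by (intro Lp_norm_le_of_supported[OF fm assms(3)]) (auto simp: Y_def L_def)
  also have "\<dots> < L * ((r / L) powr p) powr (1 / p)"
    using mB L assms(3) by (intro mult_strict_left_mono powr_less_mono2) auto
  also have "\<dots> = r"
    using r L assms(3) by (simp add: powr_powr)
  finally have "\<forall>\<epsilon>>0. \<exists>Z\<in>A. Lp_norm M p (\<lambda>\<omega>. Y \<omega> - Z \<omega>) < \<epsilon>"
    using ball[OF Y] unfolding Lp_closure_def by blast
  then obtain Z where Z: "Z \<in> A" and close: "Lp_norm M p (\<lambda>\<omega>. Y \<omega> - Z \<omega>) < measure M B powr (1 / p)"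
    using mB(1) by (metis powr_gt_zero less_irrefl)
  obtain C where Zm: "Z \<in> borel_measurable M" and ZC: "AE \<omega> in M. \<bar>Z \<omega>\<bar> \<le> C"
    and Zt: "AE \<omega> in M. t < Z \<omega>"
    using bounded_below[OF Z] unfolding Linf_def by auto
  have "measure M B powr (1 / p) \<le> Lp_norm M p (\<lambda>\<omega>. Y \<omega> - Z \<omega>)"
  proof (rule Lp_norm_ge_of_ge_one[OF fm assms(3) B(1)])
    show "integrable M (\<lambda>\<omega>. \<bar>Y \<omega> - Z \<omega>\<bar> powr p)"
      using integrable_powr_abs_diff_bounded[OF fm assms(3) Y Zm ZC] .
    show "AE \<omega> in M. \<omega> \<in> B \<longrightarrow> 1 \<le> \<bar>Y \<omega> - Z \<omega>\<bar>"
      using Zt by eventually_elim (auto simp: Y_def)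
  qed
  with close show False by simp
qed

lemma expected_utility_ereal:
  assumes "integrable M g"
  shows "expected_utility M ereal g = ereal (integral\<^sup>L M g)"
proof -
  have "(\<lambda>\<omega>. e2ennreal (max 0 (ereal (g \<omega>)))) = (\<lambda>\<omega>. ennreal (max 0 (g \<omega>)))"
    "(\<lambda>\<omega>. e2ennreal (max 0 (- ereal (g \<omega>)))) = (\<lambda>\<omega>. ennreal (max 0 (- g \<omega>)))"
    by (auto simp: max_def e2ennreal_ereal zero_ereal_def)
  moreover have "(\<integral>\<^sup>+ \<omega>. ennreal (max 0 (g \<omega>)) \<partial>M) = ennreal (integral\<^sup>L M (\<lambda>\<omega>. max 0 (g \<omega>)))"
    "(\<integral>\<^sup>+ \<omega>. ennreal (max 0 (- g \<omega>)) \<partial>M) = ennreal (integral\<^sup>L M (\<lambda>\<omega>. max 0 (- g \<omega>)))"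
    using assms by (intro nn_integral_eq_integral; simp)+
  ultimately have pos: "(\<integral>\<^sup>+ \<omega>. e2ennreal (max 0 (ereal (g \<omega>))) \<partial>M) = ennreal (integral\<^sup>L M (\<lambda>\<omega>. max 0 (g \<omega>)))"
    and neg: "(\<integral>\<^sup>+ \<omega>. e2ennreal (max 0 (- ereal (g \<omega>))) \<partial>M) = ennreal (integral\<^sup>L M (\<lambda>\<omega>. max 0 (- g \<omega>)))"
    by simp_all
  have "integral\<^sup>L M g = integral\<^sup>L M (\<lambda>\<omega>. max 0 (g \<omega>) - max 0 (- g \<omega>))"
    by (intro Bochner_Integration.integral_cong) auto
  also have "\<dots> = integral\<^sup>L M (\<lambda>\<omega>. max 0 (g \<omega>)) - integral\<^sup>L M (\<lambda>\<omega>. max 0 (- g \<omega>))"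
    using assms by (intro Bochner_Integration.integral_diff) auto
  finally show ?thesis
    unfolding expected_utility_def pos neg
    by (simp add: enn2ereal_ennreal integral_nonneg_AE)
qed

lemma expected_utility_mono:
  assumes "\<And>\<omega>. \<omega> \<in> space M \<Longrightarrow> u (X \<omega>) \<le> v (Y \<omega>)"
  shows "expected_utility M u X \<le> expected_utility M v Y"
proof -
  have "(\<integral>\<^sup>+ \<omega>. e2ennreal (max 0 (u (X \<omega>))) \<partial>M) \<le> (\<integral>\<^sup>+ \<omega>. e2ennreal (max 0 (v (Y \<omega>))) \<partial>M)"
    using assms by (intro nn_integral_mono e2ennreal_mono max.mono) auto
  moreover have "(\<integral>\<^sup>+ \<omega>. e2ennreal (max 0 (- v (Y \<omega>))) \<partial>M) \<le> (\<integral>\<^sup>+ \<omega>. e2ennreal (max 0 (- u (X \<omega>))) \<partial>M)"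
    using assms by (intro nn_integral_mono e2ennreal_mono max.mono) (auto simp: ereal_minus_le_minus)
  ultimately show ?thesis
    unfolding expected_utility_def by (intro ereal_minus_mono) (auto simp: less_eq_ennreal.rep_eq)
qed

lemma expected_utility_eq_minus_infinity:
  assumes "finite_measure M" "\<And>x. u x \<le> ereal c"
    and "B \<in> sets M" "emeasure M B \<noteq> 0" "\<And>\<omega>. \<omega> \<in> B \<Longrightarrow> u (X \<omega>) = -\<infinity>"
  shows "expected_utility M u X = -\<infinity>"
proof -
  have "\<top> = (\<integral>\<^sup>+ \<omega>. \<top> * indicator B \<omega> \<partial>M)"
    using assms(3,4) by (simp add: nn_integral_cmult_indicator ennreal_mult_eq_top_iff)
  also have "\<dots> \<le> (\<integral>\<^sup>+ \<omega>. e2ennreal (max 0 (- u (X \<omega>))) \<partial>M)"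
    using assms(5) by (intro nn_integral_mono) (auto simp: indicator_def e2ennreal_infty)
  finally have neg: "(\<integral>\<^sup>+ \<omega>. e2ennreal (max 0 (- u (X \<omega>))) \<partial>M) = \<top>"
    using top_unique by blast
  have "(\<integral>\<^sup>+ \<omega>. e2ennreal (max 0 (u (X \<omega>))) \<partial>M) \<le> (\<integral>\<^sup>+ \<omega>. ennreal (max 0 c) \<partial>M)"
  proof (intro nn_integral_mono)
    fix \<omega>
    have "max 0 (u (X \<omega>)) \<le> max 0 (ereal c)"
      using assms(2) by (rule max.mono[OF order_refl])
    also have "\<dots> = ereal (max 0 c)"
      by (auto simp: max_def)
    finally have "max 0 (u (X \<omega>)) \<le> ereal (max 0 c)" .
    then show "e2ennreal (max 0 (u (X \<omega>))) \<le> ennreal (max 0 c)"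
      by (metis e2ennreal_ereal e2ennreal_mono)
  qed
  also have "\<dots> < \<top>"
    using finite_measure.emeasure_finite[OF assms(1)] by (simp add: ennreal_mult_less_top less_top)
  finally have "enn2ereal (\<integral>\<^sup>+ \<omega>. e2ennreal (max 0 (u (X \<omega>))) \<partial>M) \<noteq> \<infinity>"
    (is "?pos \<noteq> \<infinity>") by (metis enn2ereal_top enn2ereal_inject less_irrefl)
  then show ?thesis
    unfolding expected_utility_def neg enn2ereal_top by (cases ?pos) auto
qed

lemma emeasure_le_level_set_nonzero:
  fixes Z :: "'a \<Rightarrow> real"
  assumes "Z \<in> borel_measurable M" "\<not> (AE \<omega> in M. a < Z \<omega>)"
  shows "{\<omega>\<in>space M. Z \<omega> \<le> a} \<in> sets M \<and> emeasure M {\<omega>\<in>space M. Z \<omega> \<le> a} \<noteq> 0"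
proof -
  define B where "B = {\<omega>\<in>space M. Z \<omega> \<le> a}"
  have B: "B \<in> sets M"
    unfolding B_def using assms(1) by measurable
  moreover have "emeasure M B \<noteq> 0"
    using assms(2) AE_iff_measurable[OF B, of "\<lambda>\<omega>. a < Z \<omega>"] unfolding B_def by (auto simp: not_less)
  ultimately show ?thesis
    unfolding B_def by blast
qed

lemma utility_acceptance_AE_gt_of_minus_infinity:
  assumes "prob_space M" "mono u" "\<And>x. u x \<le> ereal c" "u a = -\<infinity>"
    and "Z \<in> utility_acceptance M u \<alpha>"
  shows "AE \<omega> in M. a < Z \<omega>"
proof (rule ccontr)
  assume not_AE: "\<not> (AE \<omega> in M. a < Z \<omega>)"
  have Zm: "Z \<in> borel_measurable M" and acc: "ereal \<alpha> \<le> expected_utility M u Z"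
    using assms(5) unfolding utility_acceptance_def Linf_def by auto
  have "finite_measure M"
    using assms(1) by (simp add: prob_space_def)
  moreover have "u (Z \<omega>) = -\<infinity>" if "\<omega> \<in> {\<omega>\<in>space M. Z \<omega> \<le> a}" for \<omega>
    using that monoD[OF assms(2), of "Z \<omega>" a] assms(4) by simp
  ultimately have "expected_utility M u Z = -\<infinity>"
    using emeasure_le_level_set_nonzero[OF Zm not_AE] assms(3)
    by (intro expected_utility_eq_minus_infinity[where B = "{\<omega>\<in>space M. Z \<omega> \<le> a}"]) blast+
  with acc show False
    by simp
qed

lemma utility_acceptance_AE_gt_of_le_level:
  assumes "prob_space M" "mono u" "\<And>x. u x \<le> ereal \<alpha>" "u a \<le> ereal d" "d < \<alpha>"
    and "Z \<in> utility_acceptance M u \<alpha>"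
  shows "AE \<omega> in M. a < Z \<omega>"
proof (rule ccontr)
  assume not_AE: "\<not> (AE \<omega> in M. a < Z \<omega>)"
  have Zm: "Z \<in> borel_measurable M" and acc: "ereal \<alpha> \<le> expected_utility M u Z"
    using assms(6) unfolding utility_acceptance_def Linf_def by auto
  have fm: "finite_measure M"
    using assms(1) by (simp add: prob_space_def)
  define B where "B = {\<omega>\<in>space M. Z \<omega> \<le> a}"
  have B: "B \<in> sets M" "emeasure M B \<noteq> 0"
    using emeasure_le_level_set_nonzero[OF Zm not_AE] unfolding B_def by auto
  have fin: "emeasure M B < \<top>" "B \<inter> space M = B"
    using finite_measure.emeasure_finite[OF fm, of B] by (auto simp: B_def less_top)
  have pos: "0 < measure M B"
    using B(2) finite_measure.emeasure_eq_measure[OF fm, of B] by (simp add: zero_less_measure_iff)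
  define g where "g \<omega> = \<alpha> - (\<alpha> - d) * indicator B \<omega>" for \<omega>
  have int_ind: "integrable M (indicator B :: 'a \<Rightarrow> real)"
    using B(1) fin(1) by simp
  have "integrable M g"
    unfolding g_def using int_ind finite_measure.integrable_const[OF fm]
    by (intro Bochner_Integration.integrable_diff integrable_mult_right) auto
  moreover have "u (Z \<omega>) \<le> ereal (g \<omega>)" if "\<omega> \<in> space M" for \<omega>
  proof (cases "Z \<omega> \<le> a")
    case True
    then show ?thesis
      using that assms(4) monoD[OF assms(2), of "Z \<omega>" a] by (auto simp: g_def B_def)
  next
    case False
    then show ?thesis
      using assms(3) by (simp add: g_def B_def)
  qed
  ultimately have "expected_utility M u Z \<le> ereal (integral\<^sup>L M g)"
    using expected_utility_mono[of M u Z ereal g] expected_utility_ereal[of M g] by simp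
  also have "integral\<^sup>L M g = \<alpha> - (\<alpha> - d) * measure M B"
    unfolding g_def using int_ind finite_measure.integrable_const[OF fm] fin(2)
    by (subst Bochner_Integration.integral_diff) (auto simp: prob_space.prob_space[OF assms(1)])
  also have "\<dots> < \<alpha>"
    using pos assms(5) by simp
  finally show False
    using acc by simp
qed

lemma utility_acceptance_AE_bounded_below:
  assumes "prob_space M" "utility u" "\<And>x. u x \<le> ereal c"
    and "(\<forall>x. u x \<le> ereal \<alpha>) \<or> (\<exists>x. u x = -\<infinity>)"
  shows "\<exists>t. \<forall>Z\<in>utility_acceptance M u \<alpha>. AE \<omega> in M. t < Z \<omega>"
proof -
  have mono: "mono u"
    using assms(2) by (simp add: utility_def)
  show ?thesis
  proof (cases "\<exists>x. u x = -\<infinity>")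
    case True
    then obtain a where "u a = -\<infinity>"
      by blast
    then show ?thesis
      using utility_acceptance_AE_gt_of_minus_infinity[OF assms(1) mono assms(3)] by blast
  next
    case False
    then have le: "\<And>x. u x \<le> ereal \<alpha>"
      using assms(4) by auto
    obtain x y where "u x \<noteq> u y"
      using assms(2) unfolding utility_def by blast
    then obtain a where "u a < ereal \<alpha>"
      using le[of x] le[of y] by (metis order.not_eq_order_implies_strict)
    then obtain d where "u a < ereal d" "ereal d < ereal \<alpha>"
      using ereal_dense2 by blast
    then show ?thesis
      using utility_acceptance_AE_gt_of_le_level[OF assms(1) mono le, of a d] by (auto intro: less_imp_le)
  qed
qed

theorem corollary6p4:
  fixes M :: "'a measure" and u :: "real \<Rightarrow> ereal" and \<alpha> S0 :: real and ST :: "'a \<Rightarrow> real"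
  assumes "prob_space M" and "nonatomic M"
    and "utility u" and "\<exists>c. \<forall>x. u x \<le> ereal c"
    and "\<exists>x. u x \<ge> ereal \<alpha>"
    and "(\<forall>x. u x \<le> ereal \<alpha>) \<or> (\<exists>x. u x = -\<infinity>)"
    and "traded_asset M S0 ST" and "ST \<in> Linf M"
    and "\<forall>X\<in>Linf M. \<bar>rho (utility_acceptance M u \<alpha>) S0 ST X\<bar> \<noteq> \<infinity>"
  shows "index_fin M (utility_acceptance M u \<alpha>) = \<infinity>"
proof -
  \<comment> \<open>The hypotheses on the traded asset and on the attainability of \<alpha> only make the
    statement non-vacuous; the argument does not need them.\<close>
  obtain c where "\<And>x. u x \<le> ereal c"
    using assms(4) by blast
  then obtain t where "\<forall>Z\<in>utility_acceptance M u \<alpha>. AE \<omega> in M. t < Z \<omega>"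
    using utility_acceptance_AE_bounded_below[OF assms(1,3) _ assms(6)] by blast
  then have bounded_below: "\<And>Z. Z \<in> utility_acceptance M u \<alpha> \<Longrightarrow> Z \<in> Linf M \<and> (AE \<omega> in M. t < Z \<omega>)"
    unfolding utility_acceptance_def by blast
  have "\<not> Lp_nonempty_interior M p (Lp_closure M p (utility_acceptance M u \<alpha>))" if "1 \<le> p" for p
    using not_Lp_nonempty_interior_closure_bounded_below[OF assms(1,2) _ bounded_below] that by simp
  then have empty: "{p. 1 \<le> p \<and> Lp_nonempty_interior M p (Lp_closure M p (utility_acceptance M u \<alpha>))} = {}"
    by blast
  show ?thesis
    unfolding index_fin_def empty by (simp add: top_ereal_def)
qed

end
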